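(* Let $p$ be a prime, $\sigma$ a $p$-uniform morphism on $\mathcal A_m$ and $a\in\mathbb{F}_p$. Then for every $n\in\mathbb{N}$, $M_{\sigma^n}(a)=M_\sigma(a)^n$.
   Context: $\mathcal A_m=\{0,\dots,m-1\}$. For $W=w_0\cdots w_{r-1}\in\mathcal A_m^*$ and $j\in\mathcal A_m$, $\beta_{W,j}(T)=\sum_{i:\,w_i=j}T^{r-1-i}\in\mathbb{F}_p[T]$ (zero if $j$ does not occur). For a uniform morphism $\tau$ on $\mathcal A_m$, $M_\tau(T)=(\beta_{\tau(i),j}(T))_{0\le i,j\le m-1}$, and $M_\tau(a)$ denotes its evaluation at $T=a$. *)

theory Defs
  imports "Berlekamp_Zassenhaus.Finite_Field" "Jordan_Normal_Form.Matrix"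
    "HOL-Computational_Algebra.Polynomial"
begin

text \<open>Letters of A_m are the naturals below m; words are lists; a morphism
  is given by its images of letters, sigma i for i < m.\<close>

definition uniform_morphism :: "nat \<Rightarrow> nat \<Rightarrow> (nat \<Rightarrow> nat list) \<Rightarrow> bool" where
  "uniform_morphism k m \<sigma> \<longleftrightarrow>
     (\<forall>i<m. length (\<sigma> i) = k \<and> set (\<sigma> i) \<subseteq> {..<m})"

definition morph_word :: "(nat \<Rightarrow> nat list) \<Rightarrow> nat list \<Rightarrow> nat list" where
  "morph_word \<sigma> w = concat (map \<sigma> w)"

definition morph_pow :: "(nat \<Rightarrow> nat list) \<Rightarrow> nat \<Rightarrow> nat \<Rightarrow> nat list" where
  "morph_pow \<sigma> n i = (morph_word \<sigma> ^^ n) [i]"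

definition beta :: "nat list \<Rightarrow> nat \<Rightarrow> 'a::comm_ring_1 poly" where
  "beta W j = (\<Sum>i<length W. if W ! i = j then monom 1 (length W - 1 - i) else 0)"

definition M_mat :: "nat \<Rightarrow> (nat \<Rightarrow> nat list) \<Rightarrow> 'a::comm_ring_1 poly mat" where
  "M_mat m \<tau> = mat m m (\<lambda>(i, j). beta (\<tau> i) j)"

definition M_eval :: "nat \<Rightarrow> (nat \<Rightarrow> nat list) \<Rightarrow> 'a::comm_ring_1 \<Rightarrow> 'a mat" where
  "M_eval m \<tau> a = map_mat (\<lambda>q. poly q a) (M_mat m \<tau>)"

end

theory Submission
  imports Defs "Berlekamp_Zassenhaus.Berlekamp_Type_Based"
begin

text \<open>Appending a word V multiplies the generating polynomial of U by T^|V|. Hence for a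
  k-uniform morphism, every letter of W contributes a block of length k, which gives
  beta_{sigma(W),j}(T) = sum_c beta_{W,c}(T^k) beta_{sigma(c),j}(T), i.e.
  M_{sigma^(n+1)}(T) = M_{sigma^n}(T^k) M_sigma(T). Over F_p with k = p the Frobenius
  identity a^p = a turns this into M_{sigma^(n+1)}(a) = M_{sigma^n}(a) M_sigma(a).\<close>

lemma dim_M_eval [simp]:
  "dim_row (M_eval m \<tau> a) = m" "dim_col (M_eval m \<tau> a) = m"
  by (simp_all add: M_eval_def M_mat_def)

lemma poly_beta_Nil [simp]: "poly (beta [] j) a = 0"
  by (simp add: beta_def)

lemma poly_beta_Cons:
  "poly (beta (x # W) j) a = (if x = j then a ^ length W else 0) + poly (beta W j) a"
  unfolding beta_def poly_sum length_Cons
  by (subst sum.lessThan_Suc_shift) (auto simp: poly_monom intro!: sum.cong)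

lemma poly_beta_append:
  "poly (beta (U @ V) j) a = poly (beta U j) a * a ^ length V + poly (beta V j) a"
  by (induction U) (auto simp: poly_beta_Cons algebra_simps power_add)

lemma poly_beta_concat_map:
  fixes a :: "'a::comm_ring_1"
  assumes W: "set W \<subseteq> {..<m}" and \<sigma>: "uniform_morphism k m \<sigma>"
  shows "poly (beta (concat (map \<sigma> W)) j) a
           = (\<Sum>c<m. poly (beta W c) (a ^ k) * poly (beta (\<sigma> c) j) a)"
  using W
proof (induction W)
  case Nil
  then show ?case by simp
next
  case (Cons w W)
  have "length (concat (map \<sigma> W)) = k * length W"
    using Cons.prems \<sigma> by (induction W) (auto simp: uniform_morphism_def)
  then have "poly (beta (concat (map \<sigma> (w # W))) j) a
      = (a ^ k) ^ length W * poly (beta (\<sigma> w) j) a + poly (beta (concat (map \<sigma> W)) j) a"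
    by (simp add: poly_beta_append power_mult mult.commute)
  also have "(a ^ k) ^ length W * poly (beta (\<sigma> w) j) a
      = (\<Sum>c<m. (if w = c then (a ^ k) ^ length W else 0) * poly (beta (\<sigma> c) j) a)"
    using Cons.prems by (simp add: if_distrib[of "\<lambda>x. x * _"] sum.delta cong: if_cong)
  finally show ?case
    using Cons by (simp add: poly_beta_Cons distrib_right sum.distrib)
qed

lemma M_eval_morph_word_comp:
  fixes a :: "'a::comm_ring_1"
  assumes \<tau>: "\<forall>i<m. set (\<tau> i) \<subseteq> {..<m}" and \<sigma>: "uniform_morphism k m \<sigma>"
  shows "M_eval m (\<lambda>i. morph_word \<sigma> (\<tau> i)) a = M_eval m \<tau> (a ^ k) * M_eval m \<sigma> a"
proof (rule eq_matI)
  fix i j assume "i < dim_row (M_eval m \<tau> (a ^ k) * M_eval m \<sigma> a)"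
    and "j < dim_col (M_eval m \<tau> (a ^ k) * M_eval m \<sigma> a)"
  then have i: "i < m" and j: "j < m" by simp_all
  show "M_eval m (\<lambda>i. morph_word \<sigma> (\<tau> i)) a $$ (i, j)
      = (M_eval m \<tau> (a ^ k) * M_eval m \<sigma> a) $$ (i, j)"
    using i j poly_beta_concat_map[OF \<tau>[rule_format, OF i] \<sigma>]
    by (simp add: M_eval_def M_mat_def morph_word_def scalar_prod_def lessThan_atLeast0)
qed simp_all

lemma morph_pow_0: "morph_pow \<sigma> 0 = (\<lambda>i. [i])"
  by (simp add: morph_pow_def fun_eq_iff)

lemma morph_pow_Suc: "morph_pow \<sigma> (Suc n) = (\<lambda>i. morph_word \<sigma> (morph_pow \<sigma> n i))"
  by (simp add: morph_pow_def fun_eq_iff)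

lemma set_morph_pow_subset:
  assumes "uniform_morphism k m \<sigma>" and "i < m"
  shows "set (morph_pow \<sigma> n i) \<subseteq> {..<m}"
  using assms
  by (induction n) (auto simp: morph_pow_0 morph_pow_Suc morph_word_def uniform_morphism_def)

lemma M_eval_morph_pow_0: "M_eval m (morph_pow \<sigma> 0) a = 1\<^sub>m m"
  by (rule eq_matI) (auto simp: M_eval_def M_mat_def morph_pow_0 beta_def)

lemma M_eval_morph_pow_Suc:
  fixes a :: "'a::comm_ring_1"
  assumes "uniform_morphism k m \<sigma>"
  shows "M_eval m (morph_pow \<sigma> (Suc n)) a = M_eval m (morph_pow \<sigma> n) (a ^ k) * M_eval m \<sigma> a"
  unfolding morph_pow_Suc
  using M_eval_morph_word_comp set_morph_pow_subset assms by blast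

theorem corollary4p13:
  fixes \<sigma> :: "nat \<Rightarrow> nat list" and m :: nat and a :: "'p::prime_card mod_ring"
  assumes "uniform_morphism CARD('p) m \<sigma>"
  shows "\<forall>n::nat. M_eval m (morph_pow \<sigma> n) a = M_eval m \<sigma> a ^\<^sub>m n"
proof
  fix n
  show "M_eval m (morph_pow \<sigma> n) a = M_eval m \<sigma> a ^\<^sub>m n"
  proof (induction n)
    case 0
    show ?case by (simp add: M_eval_morph_pow_0)
  next
    case (Suc n)
    then show ?case
      using M_eval_morph_pow_Suc[OF assms, of n a] by (simp add: fermat_theorem_mod_ring)
  qed
qed

end
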